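(* Let $n>p>1$ with $p\in(1,2]$, let $f,k$ be $C^1$ functions satisfying: (F) $f(u)=u|u|^{q-2}b(u)$ with $q>2$, $b\in C^1(\mathbb R)$, $b>0$ on $(-d^-,d^+)$ for some $d^\pm>0$, $b(-d^-)=b(d^+)=0$; (K) $k(r)=h(r)r^\delta>0$ on $(0,\infty)$ with $h>0$, $\delta>-p$, $\lim_{r\to0}h(r)\in(0,\infty)$, $\lim_{r\to\infty}h(r)\in(0,\infty)$, $\limsup_{r\to0}h'(r)r<+\infty$, $\lim_{r\to\infty}h'(r)r^{1+\varpi}=0$ for some $\varpi>0$. Let $l:=p\frac{q+\delta}{p+\delta}>\frac{np}{n-p}$, $\alpha_l=\frac{p}{l-p}$, $\beta_l=(\alpha_l+1)(p-1)$, $\gamma_l=\beta_l-(n-1)$. Let $\bar f$ be a $C^1$ function with $\bar f=f$ on $(-d^-,d^+)$, $\bar f=0$ on $(-\infty,-d^--1)\cup(d^++1,+\infty)$, and $u\bar f(u)\le0$ elsewhere, and set $g_l(x,t)=k(e^t)\bar f(xe^{-\alpha_lt})e^{\alpha_l(l-1)t}$. Consider the system $$\dot x_l=\alpha_lx_l+y_l|y_l|^{\frac{2-p}{p-1}},\qquad \dot y_l=\gamma_ly_l-g_l(x_l,t),$$ and denote by $(x_l(t,\sigma,\mathbf Q),y_l(t,\sigma,\mathbf Q))$ its solution taking the value $\mathbf Q$ at $t=\sigma$. Let $\mathbf Q=(Q_x,Q_y)\in\mathbb R^2$ and $\sigma\in\mathbb R$ with $-d^-<Q_xe^{-\alpha_l\sigma}<d^+$.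 Suppose there exists $\sigma'>\sigma$ such that $-d^-<x_l(\sigma',\sigma,\mathbf Q)e^{-\alpha_l\sigma'}<d^+$. Then $-d^-<x_l(t,\sigma,\mathbf Q)e^{-\alpha_lt}<d^+$ for every $t\in(\sigma,\sigma')$. *)

theory Defs
  imports "HOL-Analysis.Analysis"
begin

definition C1_on :: "real set \<Rightarrow> (real \<Rightarrow> real) \<Rightarrow> bool" where
  "C1_on S f \<longleftrightarrow> (\<exists>f'. (\<forall>x\<in>S. (f has_real_derivative f' x) (at x)) \<and> continuous_on S f')"

end

theory Submission
  imports Defs
begin

text \<open>Put \<open>u t = x t * exp (-\<alpha> t)\<close>. Then \<open>u' = exp (-\<alpha> t) * \<phi> y\<close> with \<open>\<phi> y = y * |y| powr a\<close>,
  \<open>a = (2 - p) / (p - 1) \<ge> 0\<close>, and \<open>y' = \<gamma> y - K t * fbar u\<close> with \<open>K > 0\<close>, where \<open>fbar\<close> vanishes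
  at \<open>-dm\<close> and \<open>dp\<close> and has the sign of \<open>-u\<close> beyond them. Suppose \<open>u\<close> reached \<open>dp\<close> on
  \<open>[\<sigma>, \<sigma>']\<close>, and let \<open>\<tau>\<close> be the last time at which \<open>u\<close> attains its maximum \<open>M \<ge> dp\<close>; there
  \<open>u' = 0\<close> forces \<open>y \<tau> = 0\<close>. If \<open>M > dp\<close>, the forcing is nonpositive just after \<open>\<tau>\<close>, so \<open>y\<close>
  stays nonnegative and \<open>u\<close> cannot decrease, contradicting the choice of \<open>\<tau>\<close>. If \<open>M = dp\<close>, then
  \<open>(dp, 0)\<close> is a rest point; since \<open>a \<ge> 0\<close> (i.e. \<open>p \<le> 2\<close>) makes \<open>\<phi>\<close> Lipschitz at \<open>0\<close> and \<open>fbar\<close>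
  is Lipschitz at \<open>dp\<close>, a Gronwall estimate for \<open>(dp - u)\<^sup>2 + y\<^sup>2\<close> keeps \<open>u\<close> at \<open>dp\<close>, again a
  contradiction. The bound at \<open>-dm\<close> follows by reflection.\<close>

lemma abs_signed_powr_le:
  fixes v a :: real
  assumes "a \<ge> 0" "\<bar>v\<bar> \<le> 1"
  shows "\<bar>v * \<bar>v\<bar> powr a\<bar> \<le> \<bar>v\<bar>"
proof -
  have "\<bar>v\<bar> powr a \<le> 1"
    using assms by (intro powr_le1) auto
  then show ?thesis
    by (simp add: abs_mult mult_left_le)
qed

lemma DERIV_pointwise_lipschitz:
  fixes F :: "real \<Rightarrow> real"
  assumes "(F has_real_derivative D) (at c)"
  obtains \<delta> where "\<delta> > 0" "\<And>v. \<bar>v - c\<bar> < \<delta> \<Longrightarrow> \<bar>F v - F c\<bar> \<le> (\<bar>D\<bar> + 1) * \<bar>v - c\<bar>"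
proof -
  have "((\<lambda>v. (F v - F c) / (v - c)) \<longlongrightarrow> D) (at c)"
    using assms has_field_derivative_iff by blast
  then have "\<forall>\<^sub>F v in at c. dist ((F v - F c) / (v - c)) D < 1"
    by (rule tendstoD) simp
  then obtain \<delta> where "\<delta> > 0"
    and quot: "\<And>v. v \<noteq> c \<Longrightarrow> dist v c < \<delta> \<Longrightarrow> \<bar>(F v - F c) / (v - c) - D\<bar> < 1"
    unfolding eventually_at by (auto simp: dist_real_def)
  show thesis
  proof (rule that[OF \<open>\<delta> > 0\<close>])
    fix v assume "\<bar>v - c\<bar> < \<delta>"
    show "\<bar>F v - F c\<bar> \<le> (\<bar>D\<bar> + 1) * \<bar>v - c\<bar>"
    proof (cases "v = c")
      case False
      then have "\<bar>(F v - F c) / (v - c) - D\<bar> < 1"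
        using quot[of v] \<open>\<bar>v - c\<bar> < \<delta>\<close> by (simp add: dist_real_def)
      then have "\<bar>(F v - F c) / (v - c)\<bar> \<le> \<bar>D\<bar> + 1"
        by arith
      then show ?thesis
        using False by (simp add: abs_divide divide_le_eq)
    qed simp
  qed
qed

lemma C1_on_differentiable: "C1_on S F \<Longrightarrow> c \<in> S \<Longrightarrow> F differentiable (at c)"
  unfolding C1_on_def real_differentiable_def by blast

lemma C1_on_continuous_on: "C1_on S F \<Longrightarrow> continuous_on S F"
  unfolding C1_on_def by (meson DERIV_isCont continuous_at_imp_continuous_on)

lemma continuous_eq_on_closure:
  fixes F G :: "real \<Rightarrow> real"
  assumes "continuous_on UNIV F" "continuous_on UNIV G" "\<And>v. v \<in> S \<Longrightarrow> F v = G v" "v \<in> closure S"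
  shows "F v = G v"
  using continuous_constant_on_closure[of S "\<lambda>v. F v - G v" 0 v] assms
  by (auto intro: continuous_intros continuous_on_subset)

lemma continuous_on_last_maximiser:
  fixes u :: "real \<Rightarrow> real"
  assumes "s \<le> s'" "continuous_on {s..s'} u"
  obtains \<tau> where "\<tau> \<in> {s..s'}" "\<And>t. t \<in> {s..s'} \<Longrightarrow> u t \<le> u \<tau>"
    "\<And>t. \<tau> < t \<Longrightarrow> t \<le> s' \<Longrightarrow> u t < u \<tau>"
proof -
  obtain m where m: "m \<in> {s..s'}" "\<And>t. t \<in> {s..s'} \<Longrightarrow> u t \<le> u m"
    using continuous_attains_sup[OF compact_Icc _ assms(2)] assms(1) by auto
  define T where "T = {t \<in> {s..s'}. u t = u m}"
  have "closed T"
    unfolding T_def by (rule continuous_closed_preimage_constant[OF assms(2)]) auto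
  moreover have "T \<noteq> {}" "bdd_above T"
    using m unfolding T_def by (auto intro: bdd_aboveI[of _ s'])
  ultimately have "Sup T \<in> T"
    by (intro closed_contains_Sup)
  moreover have "u t < u m" if "Sup T < t" "t \<le> s'" for t
  proof -
    have "t \<in> {s..s'}"
      using that \<open>Sup T \<in> T\<close> unfolding T_def by auto
    moreover have "t \<notin> T"
      using that cSup_upper[OF _ \<open>bdd_above T\<close>] by force
    ultimately show ?thesis
      using m(2)[of t] unfolding T_def by auto
  qed
  ultimately show thesis
    using m by (intro that[of "Sup T"]) (auto simp: T_def)
qed

lemma linear_supersolution_nonneg:
  fixes y G :: "real \<Rightarrow> real"
  assumes "a \<le> b" "continuous_on {a..b} y"
    and "\<And>t. a < t \<Longrightarrow> t < b \<Longrightarrow> (y has_real_derivative \<gamma> * y t - G t) (at t)"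
    and "\<And>t. a < t \<Longrightarrow> t < b \<Longrightarrow> G t \<le> 0"
    and "y a \<ge> 0"
  shows "y b \<ge> 0"
proof -
  define z where "z t = y t * exp (- \<gamma> * t)" for t
  have "z a \<le> z b"
  proof (rule DERIV_nonneg_imp_increasing_open[OF \<open>a \<le> b\<close>])
    show "continuous_on {a..b} z"
      unfolding z_def by (intro continuous_intros assms(2))
    fix t assume t: "a < t" "t < b"
    have "(z has_real_derivative - G t * exp (- \<gamma> * t)) (at t)"
      unfolding z_def by (auto intro!: derivative_eq_intros assms(3)[OF t] simp: algebra_simps)
    moreover have "- G t * exp (- \<gamma> * t) \<ge> 0"
      using assms(4)[OF t] by (simp add: mult_le_0_iff)
    ultimately show "\<exists>D. (z has_real_derivative D) (at t) \<and> 0 \<le> D"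
      by blast
  qed
  then have "0 \<le> z b"
    using \<open>y a \<ge> 0\<close> unfolding z_def by (smt (verit) exp_ge_zero mult_nonneg_nonneg)
  then show ?thesis
    unfolding z_def by (simp add: zero_le_mult_iff)
qed

lemma gronwall_vanishing:
  fixes E E' :: "real \<Rightarrow> real"
  assumes "a \<le> b" "continuous_on {a..b} E"
    and "\<And>t. a < t \<Longrightarrow> t < b \<Longrightarrow> (E has_real_derivative E' t) (at t)"
    and "\<And>t. a < t \<Longrightarrow> t < b \<Longrightarrow> E' t \<le> C * E t"
    and "E a = 0" "E b \<ge> 0"
  shows "E b = 0"
proof -
  define D where "D t = E t * exp (- C * t)" for t
  have "D b \<le> D a"
  proof (rule DERIV_nonpos_imp_decreasing_open[OF \<open>a \<le> b\<close>])
    show "continuous_on {a..b} D"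
      unfolding D_def by (intro continuous_intros assms(2))
    fix t assume t: "a < t" "t < b"
    have "(D has_real_derivative (E' t - C * E t) * exp (- C * t)) (at t)"
      unfolding D_def by (auto intro!: derivative_eq_intros assms(3)[OF t] simp: algebra_simps)
    moreover have "(E' t - C * E t) * exp (- C * t) \<le> 0"
      using assms(4)[OF t] by (simp add: mult_nonpos_nonneg)
    ultimately show "\<exists>D'. (D has_real_derivative D') (at t) \<and> D' \<le> 0"
      by blast
  qed
  then show ?thesis
    using assms(5,6) unfolding D_def by (simp add: mult_le_0_iff)
qed

lemma energy_derivative_bound:
  fixes w y P \<Phi> G A L \<gamma> :: real
  assumes "w \<ge> 0" "0 < P" "P \<le> A" "\<bar>\<Phi>\<bar> \<le> \<bar>y\<bar>" "L \<ge> 0" "\<bar>G\<bar> \<le> L * w"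
  shows "2 * w * - (P * \<Phi>) + 2 * y * (\<gamma> * y - G) \<le> (A + L + 2 * \<bar>\<gamma>\<bar>) * (w\<^sup>2 + y\<^sup>2)"
proof -
  have drift: "- (P * \<Phi>) \<le> A * \<bar>y\<bar>"
    using assms(2-4) mult_left_mono[OF abs_ge_minus_self[of \<Phi>], of P]
      mult_mono[of P A "\<bar>\<Phi>\<bar>" "\<bar>y\<bar>"]
    by simp
  have "2 * w * - (P * \<Phi>) \<le> A * (2 * w * \<bar>y\<bar>)"
    using mult_left_mono[OF drift, of "2 * w"] assms(1) by (simp add: algebra_simps)
  moreover have "- (y * G) \<le> L * (w * \<bar>y\<bar>)"
    using assms(6) mult_left_mono[of "\<bar>G\<bar>" "L * w" "\<bar>y\<bar>"] abs_mult[of y G]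
    by (smt (verit) abs_ge_minus_self abs_ge_zero mult.commute mult.left_commute)
  moreover have "\<gamma> * y\<^sup>2 \<le> \<bar>\<gamma>\<bar> * y\<^sup>2"
    by (intro mult_right_mono) auto
  moreover have "2 * w * \<bar>y\<bar> \<le> w\<^sup>2 + y\<^sup>2"
    using sum_squares_bound[of w "\<bar>y\<bar>"] by (simp add: power2_eq_square)
  moreover have "0 \<le> A"
    using assms(2,3) by simp
  ultimately show ?thesis
    using assms(5) mult_left_mono[of "2 * w * \<bar>y\<bar>" "w\<^sup>2 + y\<^sup>2" A]
      mult_left_mono[of "2 * w * \<bar>y\<bar>" "w\<^sup>2 + y\<^sup>2" L] zero_le_mult_iff[of "\<bar>\<gamma>\<bar>" "w\<^sup>2"]
    by (simp add: algebra_simps power2_eq_square)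
qed

text \<open>In the theorem \<open>u t = x t * exp (-\<alpha> t)\<close>, \<open>P t = exp (-\<alpha> t)\<close> and \<open>G t = g (x t) t\<close>.\<close>
definition forced_system_on ::
    "real set \<Rightarrow> (real \<Rightarrow> real) \<Rightarrow> real \<Rightarrow> real \<Rightarrow> (real \<Rightarrow> real) \<Rightarrow> (real \<Rightarrow> real) \<Rightarrow> (real \<Rightarrow> real) \<Rightarrow> bool"
  where "forced_system_on I P a \<gamma> G u y \<longleftrightarrow>
    (\<forall>t\<in>I. (u has_real_derivative P t * (y t * \<bar>y t\<bar> powr a)) (at t) \<and>
      (y has_real_derivative \<gamma> * y t - G t) (at t))"

lemma forced_system_on_subset:
  "forced_system_on I P a \<gamma> G u y \<Longrightarrow> J \<subseteq> I \<Longrightarrow> forced_system_on J P a \<gamma> G u y"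
  unfolding forced_system_on_def by blast

lemma rescaled_forced_system:
  fixes x y G :: "real \<Rightarrow> real"
  assumes "\<And>t. t \<in> {s..s'} \<Longrightarrow>
      (x has_real_derivative \<alpha> * x t + y t * \<bar>y t\<bar> powr a) (at t within {s..s'})"
    and "\<And>t. t \<in> {s..s'} \<Longrightarrow> (y has_real_derivative \<gamma> * y t - G t) (at t within {s..s'})"
  shows "forced_system_on {s<..<s'} (\<lambda>t. exp (- \<alpha> * t)) a \<gamma> G (\<lambda>t. x t * exp (- \<alpha> * t)) y"
  unfolding forced_system_on_def
proof
  fix t assume "t \<in> {s<..<s'}"
  then have "at t within {s..s'} = at t"
    by (intro at_within_Icc_at) auto
  then have dx: "(x has_real_derivative \<alpha> * x t + y t * \<bar>y t\<bar> powr a) (at t)"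
    and dy: "(y has_real_derivative \<gamma> * y t - G t) (at t)"
    using assms[of t] \<open>t \<in> {s<..<s'}\<close> by auto
  have "((\<lambda>t. x t * exp (- \<alpha> * t)) has_real_derivative exp (- \<alpha> * t) * (y t * \<bar>y t\<bar> powr a)) (at t)"
    by (auto intro!: derivative_eq_intros dx simp: algebra_simps)
  with dy show "((\<lambda>t. x t * exp (- \<alpha> * t)) has_real_derivative
      exp (- \<alpha> * t) * (y t * \<bar>y t\<bar> powr a)) (at t) \<and> (y has_real_derivative \<gamma> * y t - G t) (at t)"
    by blast
qed

lemma forced_system_nondecreasing:
  assumes sys: "forced_system_on {\<tau><..<b} P a \<gamma> G u y"
    and "\<tau> \<le> b" "continuous_on {\<tau>..b} u" "continuous_on {\<tau>..b} y"
    and "\<And>t. t \<in> {\<tau><..<b} \<Longrightarrow> P t > 0" "\<And>t. t \<in> {\<tau><..<b} \<Longrightarrow> G t \<le> 0"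
    and "y \<tau> \<ge> 0"
  shows "u \<tau> \<le> u b"
proof (rule DERIV_nonneg_imp_increasing_open[OF \<open>\<tau> \<le> b\<close> _ assms(3)])
  fix t assume t: "\<tau> < t" "t < b"
  have "y t \<ge> 0"
  proof (rule linear_supersolution_nonneg[of \<tau> t y \<gamma> G])
    show "continuous_on {\<tau>..t} y"
      using t by (auto intro: continuous_on_subset[OF assms(4)])
    show "(y has_real_derivative \<gamma> * y r - G r) (at r)" "G r \<le> 0" if "\<tau> < r" "r < t" for r
      using sys assms(6)[of r] that t unfolding forced_system_on_def by auto
  qed (use t assms(7) in auto)
  then have "0 \<le> P t * (y t * \<bar>y t\<bar> powr a)"
    using assms(5)[of t] t by simp
  moreover have "(u has_real_derivative P t * (y t * \<bar>y t\<bar> powr a)) (at t)"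
    using sys t unfolding forced_system_on_def by auto
  ultimately show "\<exists>D. (u has_real_derivative D) (at t) \<and> 0 \<le> D"
    by blast
qed

lemma forced_system_stays_at_rest:
  assumes sys: "forced_system_on {\<tau><..<b} P a \<gamma> G u y"
    and "\<tau> \<le> b" "a \<ge> 0" "L \<ge> 0" "continuous_on {\<tau>..b} u" "continuous_on {\<tau>..b} y"
    and P: "\<And>t. t \<in> {\<tau><..<b} \<Longrightarrow> 0 < P t \<and> P t \<le> A"
    and near: "\<And>t. t \<in> {\<tau><..<b} \<Longrightarrow> u t \<le> c \<and> \<bar>y t\<bar> \<le> 1 \<and> \<bar>G t\<bar> \<le> L * (c - u t)"
    and "u \<tau> = c" "y \<tau> = 0"
  shows "u b = c"
proof -
  define E where "E t = (c - u t)\<^sup>2 + (y t)\<^sup>2" for t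
  have "E b = 0"
  proof (rule gronwall_vanishing[of \<tau> b E _ "A + L + 2 * \<bar>\<gamma>\<bar>"])
    show "continuous_on {\<tau>..b} E"
      unfolding E_def by (intro continuous_intros assms(5,6))
    fix t assume t: "\<tau> < t" "t < b"
    let ?\<Phi> = "y t * \<bar>y t\<bar> powr a"
    show "(E has_real_derivative 2 * (c - u t) * - (P t * ?\<Phi>) + 2 * y t * (\<gamma> * y t - G t)) (at t)"
      using sys t unfolding E_def forced_system_on_def
      by (auto intro!: derivative_eq_intros simp: algebra_simps)
    show "2 * (c - u t) * - (P t * ?\<Phi>) + 2 * y t * (\<gamma> * y t - G t) \<le> (A + L + 2 * \<bar>\<gamma>\<bar>) * E t"
      unfolding E_def using t P[of t] near[of t] abs_signed_powr_le[OF \<open>a \<ge> 0\<close>, of "y t"] \<open>L \<ge> 0\<close>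
      by (intro energy_derivative_bound) auto
  qed (use assms(2,9,10) in \<open>auto simp: E_def\<close>)
  then show ?thesis
    unfolding E_def by (simp add: sum_power2_eq_zero_iff)
qed

lemma forced_system_below_level:
  assumes sys: "forced_system_on {s<..<s'} P a \<gamma> G u y"
    and "s < s'" "a \<ge> 0" "L \<ge> 0" "\<delta> > 0"
    and cu: "continuous_on {s..s'} u" and cy: "continuous_on {s..s'} y"
    and P: "\<And>t. t \<in> {s<..<s'} \<Longrightarrow> 0 < P t \<and> P t \<le> A"
    and above: "\<And>t. t \<in> {s<..<s'} \<Longrightarrow> c \<le> u t \<Longrightarrow> G t \<le> 0"
    and below: "\<And>t. t \<in> {s<..<s'} \<Longrightarrow> c - \<delta> \<le> u t \<Longrightarrow> u t \<le> c \<Longrightarrow> \<bar>G t\<bar> \<le> L * (c - u t)"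
    and "u s < c" "u s' < c"
  shows "\<forall>t\<in>{s..s'}. u t < c"
proof (rule ccontr)
  assume "\<not> ?thesis"
  then obtain t0 where "t0 \<in> {s..s'}" "c \<le> u t0"
    by force
  obtain \<tau> where "\<tau> \<in> {s..s'}" and max: "\<And>t. t \<in> {s..s'} \<Longrightarrow> u t \<le> u \<tau>"
    and last: "\<And>t. \<tau> < t \<Longrightarrow> t \<le> s' \<Longrightarrow> u t < u \<tau>"
    using continuous_on_last_maximiser[OF _ cu] \<open>s < s'\<close> by auto
  have "c \<le> u \<tau>"
    using max[of t0] \<open>t0 \<in> {s..s'}\<close> \<open>c \<le> u t0\<close> by linarith
  then have \<tau>: "\<tau> \<in> {s<..<s'}"
    using \<open>\<tau> \<in> {s..s'}\<close> \<open>u s < c\<close> \<open>u s' < c\<close> by (cases "\<tau> = s \<or> \<tau> = s'") auto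
  have du: "(u has_real_derivative P \<tau> * (y \<tau> * \<bar>y \<tau>\<bar> powr a)) (at \<tau>)"
    and dy: "(y has_real_derivative \<gamma> * y \<tau> - G \<tau>) (at \<tau>)"
    using sys \<tau> unfolding forced_system_on_def by auto
  have "P \<tau> * (y \<tau> * \<bar>y \<tau>\<bar> powr a) = 0"
    by (rule DERIV_local_max[OF du, of "min (\<tau> - s) (s' - \<tau>)"]) (use \<tau> in \<open>auto intro!: max simp: abs_less_iff\<close>)
  then have "y \<tau> = 0"
    using P[OF \<tau>] by simp
  have u_lim: "(u \<longlongrightarrow> u \<tau>) (at_right \<tau>)"
    using DERIV_isCont[OF du] unfolding isCont_def by (rule tendsto_mono[OF at_le[OF subset_UNIV]])
  have "(y \<longlongrightarrow> y \<tau>) (at_right \<tau>)"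
    using DERIV_isCont[OF dy] unfolding isCont_def by (rule tendsto_mono[OF at_le[OF subset_UNIV]])
  then have y_lim: "(y \<longlongrightarrow> 0) (at_right \<tau>)"
    using \<open>y \<tau> = 0\<close> by simp
  have right_of_\<tau>: "\<exists>b\<in>{\<tau><..<s'}. \<forall>t\<in>{\<tau><..<b}. Q t" if "\<forall>\<^sub>F t in at_right \<tau>. Q t" for Q
  proof -
    have "\<forall>\<^sub>F t in at_right \<tau>. Q t \<and> t \<in> {\<tau><..<s'}"
      using that eventually_at_right_real[of \<tau> s'] \<tau> by (auto intro: eventually_conj)
    then obtain b where "b > \<tau>" and b: "\<And>t. \<tau> < t \<Longrightarrow> t < b \<Longrightarrow> Q t \<and> t \<in> {\<tau><..<s'}"
      unfolding eventually_at_right_field by blast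
    then have "(\<tau> + b) / 2 \<in> {\<tau><..<s'}"
      using b[of "(\<tau> + b) / 2"] by auto
    then show ?thesis
      using b by (intro bexI[of _ "(\<tau> + b) / 2"]) auto
  qed
  have sub: "{\<tau><..<b} \<subseteq> {s<..<s'}" "{\<tau>..b} \<subseteq> {s..s'}" if "b \<in> {\<tau><..<s'}" for b
    using that \<tau> by auto
  consider "c < u \<tau>" | "u \<tau> = c"
    using \<open>c \<le> u \<tau>\<close> by linarith
  then show False
  proof cases
    case 1
    then have "\<forall>\<^sub>F t in at_right \<tau>. c < u t"
      using order_tendstoD(1)[OF u_lim] by blast
    then obtain b where b: "b \<in> {\<tau><..<s'}" and above_c: "\<And>t. t \<in> {\<tau><..<b} \<Longrightarrow> c < u t"
      using right_of_\<tau> by blast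
    have "u \<tau> \<le> u b"
    proof (rule forced_system_nondecreasing[OF forced_system_on_subset[OF sys sub(1)[OF b]]])
      show "continuous_on {\<tau>..b} u" "continuous_on {\<tau>..b} y"
        using continuous_on_subset[OF cu sub(2)[OF b]] continuous_on_subset[OF cy sub(2)[OF b]] .
      show "P t > 0" "G t \<le> 0" if "t \<in> {\<tau><..<b}" for t
        using that sub(1)[OF b] P[of t] above[of t] above_c[OF that]
        by auto
    qed (use b \<open>y \<tau> = 0\<close> in auto)
    then show False
      using last[of b] b by auto
  next
    case 2
    have "\<forall>\<^sub>F t in at_right \<tau>. c - \<delta> < u t \<and> -1 < y t \<and> y t < 1"
      using order_tendstoD[OF u_lim] order_tendstoD[OF y_lim] 2 \<open>\<delta> > 0\<close>
      by (intro eventually_conj) auto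
    then obtain b where b: "b \<in> {\<tau><..<s'}"
      and near: "\<And>t. t \<in> {\<tau><..<b} \<Longrightarrow> c - \<delta> < u t \<and> -1 < y t \<and> y t < 1"
      using right_of_\<tau> by blast
    have "u b = c"
    proof (rule forced_system_stays_at_rest[OF forced_system_on_subset[OF sys sub(1)[OF b]]])
      show "continuous_on {\<tau>..b} u" "continuous_on {\<tau>..b} y"
        using continuous_on_subset[OF cu sub(2)[OF b]] continuous_on_subset[OF cy sub(2)[OF b]] .
      fix t assume t: "t \<in> {\<tau><..<b}"
      show "0 < P t \<and> P t \<le> A"
        using P[of t] sub(1)[OF b] t by auto
      have "u t \<le> c"
        using max[of t] sub(2)[OF b] t 2 by auto
      then show "u t \<le> c \<and> \<bar>y t\<bar> \<le> 1 \<and> \<bar>G t\<bar> \<le> L * (c - u t)"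
        using below[of t] near[OF t] sub(1)[OF b] t by auto
    qed (use b 2 \<open>y \<tau> = 0\<close> \<open>a \<ge> 0\<close> \<open>L \<ge> 0\<close> in auto)
    then show False
      using last[of b] b 2 by auto
  qed
qed

lemma forced_system_below_zero:
  fixes u y P K F :: "real \<Rightarrow> real"
  assumes sys: "forced_system_on {s<..<s'} P a \<gamma> (\<lambda>t. K t * F (u t)) u y"
    and "s < s'" "a \<ge> 0"
    and "continuous_on {s..s'} u" "continuous_on {s..s'} y"
    and cP: "continuous_on {s..s'} P" and cK: "continuous_on {s..s'} K"
    and P: "\<And>t. t \<in> {s..s'} \<Longrightarrow> P t > 0" and K: "\<And>t. t \<in> {s..s'} \<Longrightarrow> K t > 0"
    and "F differentiable (at c)" "F c = 0" and F: "\<And>v. c \<le> v \<Longrightarrow> F v \<le> 0"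
    and "u s < c" "u s' < c"
  shows "\<forall>t\<in>{s..s'}. u t < c"
proof -
  obtain A where A: "\<And>t. t \<in> {s..s'} \<Longrightarrow> \<bar>P t\<bar> \<le> A"
    using continuous_on_compact_bound[OF compact_Icc cP] by auto
  obtain B where "B \<ge> 0" and B: "\<And>t. t \<in> {s..s'} \<Longrightarrow> \<bar>K t\<bar> \<le> B"
    using continuous_on_compact_bound[OF compact_Icc cK] by auto
  obtain D where "(F has_real_derivative D) (at c)"
    using \<open>F differentiable (at c)\<close> real_differentiable_def by blast
  then obtain \<delta> where "\<delta> > 0" and lip: "\<And>v. \<bar>v - c\<bar> < \<delta> \<Longrightarrow> \<bar>F v\<bar> \<le> (\<bar>D\<bar> + 1) * \<bar>v - c\<bar>"
    using DERIV_pointwise_lipschitz \<open>F c = 0\<close> by (metis diff_zero)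
  show ?thesis
  proof (rule forced_system_below_level[OF sys, of "B * (\<bar>D\<bar> + 1)" "\<delta> / 2" A])
    fix t assume t: "t \<in> {s<..<s'}"
    show "0 < P t \<and> P t \<le> A"
      using P[of t] A[of t] t by auto
    show "K t * F (u t) \<le> 0" if "c \<le> u t"
      using K[of t] F[OF that] t by (simp add: mult_nonpos_nonneg mult_le_0_iff)
    assume "c - \<delta> / 2 \<le> u t" "u t \<le> c"
    then have "\<bar>F (u t)\<bar> \<le> (\<bar>D\<bar> + 1) * (c - u t)"
      using lip[of "u t"] \<open>\<delta> > 0\<close> by auto
    then show "\<bar>K t * F (u t)\<bar> \<le> B * (\<bar>D\<bar> + 1) * (c - u t)"
      using B[of t] t mult_mono[of "\<bar>K t\<bar>" B "\<bar>F (u t)\<bar>"] \<open>B \<ge> 0\<close>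
      by (auto simp: abs_mult mult.assoc)
  qed (use assms(2-5,13,14) \<open>B \<ge> 0\<close> \<open>\<delta> > 0\<close> in auto)
qed

lemma forced_system_between_zeros:
  fixes u y P K F :: "real \<Rightarrow> real"
  assumes sys: "forced_system_on {s<..<s'} P a \<gamma> (\<lambda>t. K t * F (u t)) u y"
    and "s < s'" "a \<ge> 0"
    and cu: "continuous_on {s..s'} u" and cy: "continuous_on {s..s'} y"
    and "continuous_on {s..s'} P" "continuous_on {s..s'} K"
    and "\<And>t. t \<in> {s..s'} \<Longrightarrow> P t > 0" "\<And>t. t \<in> {s..s'} \<Longrightarrow> K t > 0"
    and "cm < 0" "0 < cp" and sign: "\<And>v. v \<le> cm \<or> cp \<le> v \<Longrightarrow> v * F v \<le> 0"
    and "F differentiable (at cm)" "F differentiable (at cp)" "F cm = 0" "F cp = 0"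
    and "cm < u s" "u s < cp" "cm < u s'" "u s' < cp"
  shows "\<forall>t\<in>{s..s'}. cm < u t \<and> u t < cp"
proof -
  have "\<forall>t\<in>{s..s'}. u t < cp"
  proof (rule forced_system_below_zero[OF sys])
    show "F v \<le> 0" if "cp \<le> v" for v
      using sign[of v] that \<open>0 < cp\<close> by (simp add: mult_le_0_iff)
  qed (use assms in auto)
  moreover have "\<forall>t\<in>{s..s'}. - u t < - cm"
    \<comment> \<open>\<open>(-u, -y)\<close> solves the system with forcing \<open>v \<mapsto> - F (- v)\<close>\<close>
  proof (rule forced_system_below_zero[where F = "\<lambda>v. - F (- v)" and y = "\<lambda>t. - y t"])
    show "forced_system_on {s<..<s'} P a \<gamma> (\<lambda>t. K t * - F (- (- u t))) (\<lambda>t. - u t) (\<lambda>t. - y t)"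
      using sys unfolding forced_system_on_def by (auto intro!: derivative_eq_intros)
    show "(\<lambda>v. - F (- v)) differentiable (at (- cm))"
      using differentiable_chain_at[of uminus "- cm" F] \<open>F differentiable (at cm)\<close>
      by (auto simp: o_def intro!: derivative_intros)
    show "- F (- v) \<le> 0" if "- cm \<le> v" for v
      using sign[of "- v"] that \<open>cm < 0\<close> by (simp add: zero_le_mult_iff)
  qed (use assms in \<open>auto intro!: continuous_intros\<close>)
  ultimately show ?thesis
    by auto
qed

theorem lemma3p5:
  fixes n :: nat and p q \<delta> w dm dp L0 Linf \<sigma> \<sigma>' Qx Qy :: real
    and f b fbar k h x y :: "real \<Rightarrow> real"
  defines "l \<equiv> p * (q + \<delta>) / (p + \<delta>)"
  defines "\<alpha> \<equiv> p / (l - p)"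
  defines "\<beta> \<equiv> (\<alpha> + 1) * (p - 1)"
  defines "\<gamma> \<equiv> \<beta> - (real n - 1)"
  defines "g \<equiv> (\<lambda>X t. k (exp t) * fbar (X * exp (- \<alpha> * t)) * exp (\<alpha> * (l - 1) * t))"
  assumes hp: "1 < p" "p \<le> 2" "p < real n"
  and hF: "q > 2" "C1_on UNIV b" "dm > 0" "dp > 0"
      "\<And>u. - dm < u \<Longrightarrow> u < dp \<Longrightarrow> b u > 0" "b (- dm) = 0" "b dp = 0"
      "\<And>u. f u = u * \<bar>u\<bar> powr (q - 2) * b u" "C1_on UNIV f"
  and hK: "C1_on {0<..} k" "\<delta> > - p"
      "\<And>r. r > 0 \<Longrightarrow> k r = h r * r powr \<delta>"
      "\<And>r. r > 0 \<Longrightarrow> k r > 0" "\<And>r. r > 0 \<Longrightarrow> h r > 0"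
      "L0 > 0" "(h \<longlongrightarrow> L0) (at_right 0)"
      "Linf > 0" "(h \<longlongrightarrow> Linf) at_top"
      "Limsup (at_right 0) (\<lambda>r. ereal (deriv h r * r)) < \<infinity>"
      "w > 0" "((\<lambda>r. deriv h r * r powr (1 + w)) \<longlongrightarrow> 0) at_top"
  and hl: "l > real n * p / (real n - p)"
  and hfbar: "C1_on UNIV fbar"
      "\<And>u. - dm < u \<Longrightarrow> u < dp \<Longrightarrow> fbar u = f u"
      "\<And>u. u < - dm - 1 \<or> u > dp + 1 \<Longrightarrow> fbar u = 0"
      "\<And>u. u \<le> - dm \<or> u \<ge> dp \<Longrightarrow> u * fbar u \<le> 0"
  and hsol: "\<sigma> < \<sigma>'"
      "\<And>t. t \<in> {\<sigma>..\<sigma>'} \<Longrightarrow>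
         (x has_real_derivative (\<alpha> * x t + y t * \<bar>y t\<bar> powr ((2 - p) / (p - 1))))
           (at t within {\<sigma>..\<sigma>'})"
      "\<And>t. t \<in> {\<sigma>..\<sigma>'} \<Longrightarrow>
         (y has_real_derivative (\<gamma> * y t - g (x t) t)) (at t within {\<sigma>..\<sigma>'})"
      "x \<sigma> = Qx" "y \<sigma> = Qy"
  and hQ: "- dm < Qx * exp (- \<alpha> * \<sigma>)" "Qx * exp (- \<alpha> * \<sigma>) < dp"
  and hend: "- dm < x \<sigma>' * exp (- \<alpha> * \<sigma>')" "x \<sigma>' * exp (- \<alpha> * \<sigma>') < dp"
  shows "\<forall>t\<in>{\<sigma><..<\<sigma>'}. - dm < x t * exp (- \<alpha> * t) \<and> x t * exp (- \<alpha> * t) < dp"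
proof -
  define a where "a = (2 - p) / (p - 1)"
  define u where "u t = x t * exp (- \<alpha> * t)" for t
  define K where "K t = k (exp t) * exp (\<alpha> * (l - 1) * t)" for t
  have "g (x t) t = K t * fbar (u t)" for t
    unfolding g_def K_def u_def by simp
  then have sys: "forced_system_on {\<sigma><..<\<sigma>'} (\<lambda>t. exp (- \<alpha> * t)) a \<gamma> (\<lambda>t. K t * fbar (u t)) u y"
    using rescaled_forced_system[of \<sigma> \<sigma>' x \<alpha> y a \<gamma> "\<lambda>t. K t * fbar (u t)"] hsol(2,3)
    unfolding u_def a_def by simp
  have "fbar v = f v" if "v \<in> closure {- dm<..<dp}" for v
    using continuous_eq_on_closure[OF C1_on_continuous_on[OF hfbar(1)] C1_on_continuous_on[OF hF(9)] _ that]
      hfbar(2) by auto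
  then have fbar_zeros: "fbar (- dm) = 0" "fbar dp = 0"
    using hF(3,4,6,7,8) by simp_all
  have "continuous_on {\<sigma>..\<sigma>'} x"
    by (rule DERIV_continuous_on[OF hsol(2)])
  then have cu: "continuous_on {\<sigma>..\<sigma>'} u"
    unfolding u_def by (intro continuous_intros)
  have cy: "continuous_on {\<sigma>..\<sigma>'} y"
    by (rule DERIV_continuous_on[OF hsol(3)])
  have "continuous_on {\<sigma>..\<sigma>'} (\<lambda>t. k (exp t))"
    by (rule continuous_on_compose2[OF C1_on_continuous_on[OF hK(1)]]) (auto intro: continuous_intros)
  then have cK: "continuous_on {\<sigma>..\<sigma>'} K"
    unfolding K_def by (intro continuous_intros)
  have "\<forall>t\<in>{\<sigma>..\<sigma>'}. - dm < u t \<and> u t < dp"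
  proof (rule forced_system_between_zeros[OF sys hsol(1) _ cu cy _ cK])
    show "v \<le> - dm \<or> dp \<le> v \<Longrightarrow> v * fbar v \<le> 0" for v
      using hfbar(4) by blast
    show "fbar differentiable (at (- dm))" "fbar differentiable (at dp)"
      using C1_on_differentiable[OF hfbar(1)] by simp_all
    show "- dm < u \<sigma>" "u \<sigma> < dp" "- dm < u \<sigma>'" "u \<sigma>' < dp"
      unfolding u_def using hsol(4) hQ hend by simp_all
    show "continuous_on {\<sigma>..\<sigma>'} (\<lambda>t. exp (- \<alpha> * t))"
      by (intro continuous_intros)
  qed (use hp hK(4) hF(3,4) fbar_zeros in \<open>simp_all add: a_def K_def\<close>)
  then show ?thesis
    unfolding u_def by simp
qed

end
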